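(* Let $R$ be a $\delta$-ring, $I$ an ideal of $R$ containing $p$, and $A$ a $\delta$-$R$-algebra which is $I$-adically separated with $A/I^nA$ smooth over $R/I^n$ for all $n\ge1$. Let $T_1,\dots,T_d\in A$ be such that $d(T_i\bmod IA)$ form a basis of $\Omega_{(A/IA)/(R/I)}$. Let $\alpha,\beta\in A$ with $\delta(\alpha)=\alpha\beta$ and let $\partial$ be an $\alpha$-derivation of $A$ over $R$. Then $\partial$ is $\delta$-compatible with respect to $\beta$ if and only if each $T_i$ ($1\le i\le d$) is $\delta$-compatible with respect to $\partial$ and $\beta$.
   Context: $p$ a fixed prime; $\delta$-rings: $\delta(0)=\delta(1)=0$, $\delta(x+y)=\delta(x)+\delta(y)-\sum_{i=1}^{p-1}\frac1p\binom pi x^iy^{p-i}$, $\delta(xy)=\delta(x)y^p+x^p\delta(y)+p\delta(x)\delta(y)$. An $\alpha$-derivation of $A$ over $R$ is an $R$-linear $\partial$ with $\partial(1)=0$, $\partial(xy)=\partial(x)y+x\partial(y)+\alpha\partial(x)\partial(y)$. An element $x\in A$ is $\delta$-compatible with respect to $\partial$ and $\beta$ if $\partial(\delta(x))=(\alpha^{p-1}+p\beta)\delta(\partial(x))+\beta\partial(x)^p-\sum_{\nu=1}^{p-1}\frac1p\binom p\nu x^{p-\nu}\alpha^{\nu-1}\partial(x)^\nu$; $\partial$ is $\delta$-compatible with respect to $\beta$ if every $x\in A$ is. *)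

theory Defs
  imports "HOL-Library.Poly_Mapping" "HOL-Computational_Algebra.Primes"
begin

text \<open>The integer (p choose i)/p, for 0 < i < p, is written of_nat ((p choose i) div p).\<close>

definition delta_ring :: "nat \<Rightarrow> ('r::comm_ring_1 \<Rightarrow> 'r) \<Rightarrow> bool" where
  "delta_ring p \<delta> \<longleftrightarrow>
     \<delta> 0 = 0 \<and> \<delta> 1 = 0 \<and>
     (\<forall>x y. \<delta> (x + y) = \<delta> x + \<delta> y
         - (\<Sum>i\<in>{1..p-1}. of_nat ((p choose i) div p) * x ^ i * y ^ (p - i))) \<and>
     (\<forall>x y. \<delta> (x * y) = \<delta> x * y ^ p + x ^ p * \<delta> y + of_nat p * \<delta> x * \<delta> y)"

definition ring_hom_map :: "('r::comm_ring_1 \<Rightarrow> 'a::comm_ring_1) \<Rightarrow> bool" where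
  "ring_hom_map \<phi> \<longleftrightarrow> \<phi> 1 = 1 \<and> (\<forall>x y. \<phi> (x + y) = \<phi> x + \<phi> y) \<and> (\<forall>x y. \<phi> (x * y) = \<phi> x * \<phi> y)"

definition delta_algebra :: "nat \<Rightarrow> ('r::comm_ring_1 \<Rightarrow> 'r) \<Rightarrow> ('a::comm_ring_1 \<Rightarrow> 'a) \<Rightarrow> ('r \<Rightarrow> 'a) \<Rightarrow> bool" where
  "delta_algebra p \<delta>R \<delta>A \<phi> \<longleftrightarrow> delta_ring p \<delta>R \<and> delta_ring p \<delta>A \<and> ring_hom_map \<phi> \<and>
     (\<forall>r. \<phi> (\<delta>R r) = \<delta>A (\<phi> r))"

definition alpha_derivation :: "('r::comm_ring_1 \<Rightarrow> 'a::comm_ring_1) \<Rightarrow> 'a \<Rightarrow> ('a \<Rightarrow> 'a) \<Rightarrow> bool" where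
  "alpha_derivation \<phi> \<alpha> D \<longleftrightarrow>
     (\<forall>x y. D (x + y) = D x + D y) \<and> (\<forall>r x. D (\<phi> r * x) = \<phi> r * D x) \<and>
     D 1 = 0 \<and> (\<forall>x y. D (x * y) = D x * y + x * D y + \<alpha> * D x * D y)"

definition delta_compatible_elem ::
  "nat \<Rightarrow> ('a::comm_ring_1 \<Rightarrow> 'a) \<Rightarrow> 'a \<Rightarrow> 'a \<Rightarrow> ('a \<Rightarrow> 'a) \<Rightarrow> 'a \<Rightarrow> bool" where
  "delta_compatible_elem p \<delta> \<alpha> \<beta> D x \<longleftrightarrow>
     D (\<delta> x) = (\<alpha> ^ (p - 1) + of_nat p * \<beta>) * \<delta> (D x) + \<beta> * (D x) ^ p
       - (\<Sum>\<nu>\<in>{1..p-1}. of_nat ((p choose \<nu>) div p) * x ^ (p - \<nu>) * \<alpha> ^ (\<nu> - 1) * (D x) ^ \<nu>)"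

definition delta_compatible ::
  "nat \<Rightarrow> ('a::comm_ring_1 \<Rightarrow> 'a) \<Rightarrow> 'a \<Rightarrow> 'a \<Rightarrow> ('a \<Rightarrow> 'a) \<Rightarrow> bool" where
  "delta_compatible p \<delta> \<alpha> \<beta> D \<longleftrightarrow> (\<forall>x. delta_compatible_elem p \<delta> \<alpha> \<beta> D x)"

definition is_ideal :: "'a::comm_ring_1 set \<Rightarrow> bool" where
  "is_ideal I \<longleftrightarrow> 0 \<in> I \<and> (\<forall>x\<in>I. \<forall>y\<in>I. x + y \<in> I) \<and> (\<forall>a. \<forall>x\<in>I. a * x \<in> I)"

inductive_set ideal_gen :: "'a::comm_ring_1 set \<Rightarrow> 'a set" for S where
  gen_zero: "0 \<in> ideal_gen S"
| gen_mult: "s \<in> S \<Longrightarrow> a * s \<in> ideal_gen S"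
| gen_add: "x \<in> ideal_gen S \<Longrightarrow> y \<in> ideal_gen S \<Longrightarrow> x + y \<in> ideal_gen S"

fun ideal_pow :: "'a::comm_ring_1 set \<Rightarrow> nat \<Rightarrow> 'a set" where
  "ideal_pow I 0 = UNIV"
| "ideal_pow I (Suc n) = ideal_gen {x * y | x y. x \<in> I \<and> y \<in> ideal_pow I n}"

definition ext_ideal :: "('r::comm_ring_1 \<Rightarrow> 'a::comm_ring_1) \<Rightarrow> 'r set \<Rightarrow> 'a set" where
  "ext_ideal \<phi> J = ideal_gen (\<phi> ` J)"

definition adically_separated :: "('r::comm_ring_1 \<Rightarrow> 'a::comm_ring_1) \<Rightarrow> 'r set \<Rightarrow> bool" where
  "adically_separated \<phi> I \<longleftrightarrow> (\<Inter>n\<in>{1..}. ext_ideal \<phi> (ideal_pow I n)) = {0}"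

type_synonym 'r mpoly = "(nat \<Rightarrow>\<^sub>0 nat) \<Rightarrow>\<^sub>0 'r"

definition poly_vars_below :: "nat \<Rightarrow> 'r::comm_ring_1 mpoly set" where
  "poly_vars_below N = {P. \<forall>m\<in>Poly_Mapping.keys P. Poly_Mapping.keys m \<subseteq> {..<N}}"

definition const_poly :: "'r::comm_ring_1 \<Rightarrow> 'r mpoly" where
  "const_poly c = Poly_Mapping.single 0 c"

definition peval :: "('r::comm_ring_1 \<Rightarrow> 'a::comm_ring_1) \<Rightarrow> (nat \<Rightarrow> 'a) \<Rightarrow> 'r mpoly \<Rightarrow> 'a" where
  "peval \<phi> x P = (\<Sum>m\<in>Poly_Mapping.keys P. \<phi> (Poly_Mapping.lookup P m) * (\<Prod>j\<in>Poly_Mapping.keys m. x j ^ Poly_Mapping.lookup m j))"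

definition peval_pderiv :: "('r::comm_ring_1 \<Rightarrow> 'a::comm_ring_1) \<Rightarrow> (nat \<Rightarrow> 'a) \<Rightarrow> nat \<Rightarrow> 'r mpoly \<Rightarrow> 'a" where
  "peval_pderiv \<phi> x i P = (\<Sum>m\<in>Poly_Mapping.keys P. \<phi> (Poly_Mapping.lookup P m) * of_nat (Poly_Mapping.lookup m i) * x i ^ (Poly_Mapping.lookup m i - 1)
        * (\<Prod>j\<in>Poly_Mapping.keys m - {i}. x j ^ Poly_Mapping.lookup m j))"

section \<open>Smoothness of A/J over R/K (Stacks 00T2: finite presentation + naive cotangent
  complex quasi-isomorphic to a finite projective module in degree 0)\<close>

text \<open>Here K is an ideal of R, J an ideal of A with phi(K) in J; the R/K-algebra A/J is presented by
  R/K[x_0..x_{N-1}] -> A/J, x_i |-> a_i mod J.  Ker is the preimage in R[x] of the kernel.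
  Conditions: (i) surjective; (ii) kernel finitely generated (mod K R[x]);
  (iii) H_1(NL) = 0, i.e. Kbar/Kbar^2 -> (A/J)^N, g |-> (dg/dx_i) is injective;
  (iv) H_0(NL) = coker finite projective, i.e. the image of (iii) is a direct summand of (A/J)^N,
  given by an idempotent matrix E over A/J with image equal to it.\<close>
definition smooth_quot :: "('r::comm_ring_1 \<Rightarrow> 'a::comm_ring_1) \<Rightarrow> 'r set \<Rightarrow> 'a set \<Rightarrow> bool" where
  "smooth_quot \<phi> K J \<longleftrightarrow>
    (\<exists>(N::nat) (a::nat \<Rightarrow> 'a) (G::'r mpoly set).
      let Ker = {P \<in> poly_vars_below N. peval \<phi> a P \<in> J} in
      finite G \<and> G \<subseteq> poly_vars_below N \<and>
      (\<forall>y. \<exists>P\<in>poly_vars_below N. y - peval \<phi> a P \<in> J) \<and>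
      Ker = ideal_gen (G \<union> const_poly ` K) \<inter> poly_vars_below N \<and>
      (\<forall>g\<in>Ker. (\<forall>i<N. peval_pderiv \<phi> a i g \<in> J) \<longrightarrow>
          g \<in> ideal_gen ({g1 * g2 | g1 g2. g1 \<in> Ker \<and> g2 \<in> Ker} \<union> const_poly ` K)) \<and>
      (\<exists>E::nat \<Rightarrow> nat \<Rightarrow> 'a.
          (\<forall>i<N. \<forall>j<N. (\<Sum>k<N. E i k * E k j) - E i j \<in> J) \<and>
          (\<forall>g\<in>Ker. \<forall>i<N. (\<Sum>k<N. E i k * peval_pderiv \<phi> a k g) - peval_pderiv \<phi> a i g \<in> J) \<and>
          (\<forall>w::nat \<Rightarrow> 'a. \<exists>g\<in>Ker. \<forall>i<N. (\<Sum>k<N. E i k * w k) - peval_pderiv \<phi> a i g \<in> J)))"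

text \<open>Omega_{(A/J)/(R/K)} is the free A-module on symbols dc (c in A), encoded as finitely supported
  maps 'a =>0 'a (symbol c |-> coefficient), modulo the A-submodule generated by additivity, Leibniz,
  d(phi r) = 0 and J-multiples (J contains phi(K)).\<close>
inductive_set kahler_rel :: "('r::comm_ring_1 \<Rightarrow> 'a::comm_ring_1) \<Rightarrow> 'a set \<Rightarrow> ('a \<Rightarrow>\<^sub>0 'a) set"
  for \<phi> J where
  kr_zero: "0 \<in> kahler_rel \<phi> J"
| kr_add_rel: "Poly_Mapping.single (c + c') b - Poly_Mapping.single c b - Poly_Mapping.single c' b \<in> kahler_rel \<phi> J"
| kr_leibniz: "Poly_Mapping.single (c * c') b - Poly_Mapping.single c' (b * c) - Poly_Mapping.single c (b * c') \<in> kahler_rel \<phi> J"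
| kr_const: "Poly_Mapping.single (\<phi> r) b \<in> kahler_rel \<phi> J"
| kr_ideal: "x \<in> J \<Longrightarrow> Poly_Mapping.single c x \<in> kahler_rel \<phi> J"
| kr_plus: "u \<in> kahler_rel \<phi> J \<Longrightarrow> v \<in> kahler_rel \<phi> J \<Longrightarrow> u + v \<in> kahler_rel \<phi> J"

definition kahler_basis :: "('r::comm_ring_1 \<Rightarrow> 'a::comm_ring_1) \<Rightarrow> 'a set \<Rightarrow> nat \<Rightarrow> (nat \<Rightarrow> 'a) \<Rightarrow> bool" where
  "kahler_basis \<phi> J d T \<longleftrightarrow>
     (\<forall>c. \<exists>b::nat \<Rightarrow> 'a. Poly_Mapping.single c 1 - (\<Sum>i<d. Poly_Mapping.single (T i) (b i)) \<in> kahler_rel \<phi> J) \<and>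
     (\<forall>b::nat \<Rightarrow> 'a. (\<Sum>i<d. Poly_Mapping.single (T i) (b i)) \<in> kahler_rel \<phi> J \<longrightarrow> (\<forall>i<d. b i \<in> J))"

end

(*
  Put \<sigma> x = x + \<alpha> D x and F x = x ^ p + p \<delta> x; both are ring endomorphisms of A, and the
  defect E x = D (\<delta> x) - RHS x of delta-compatibility satisfies p \<alpha> E x = \<sigma> (F x) - F (\<sigma> x).
  Consequently, after multiplication by p \<alpha>, E is additive and satisfies
  E (x y) = E x U y + U x E y - p \<alpha> E x E y with U = \<sigma> \<circ> F. Both identities are integer
  polynomial identities in \<alpha>, \<beta> and the jets (x, D x, \<delta> x, \<delta> (D x), D (\<delta> x)) of x and y, so
  they can be checked in a polynomial ring over the integers, where p \<alpha> cancels, and then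
  specialised. Thus E is a U-twisted derivation vanishing on R. Pairing it with Kaehler forms,
  E (A) \<subseteq> I^n A and E (T i) = 0 give E (A) \<subseteq> I^(n+1) A: the Leibniz relation costs the factor
  p \<alpha> \<in> I A, and U preserves I A. Separatedness then forces E = 0.
*)

theory Submission
  imports Defs
begin

lemma ring_hom_map_zero: "ring_hom_map h \<Longrightarrow> h 0 = 0"
  unfolding ring_hom_map_def by (metis add_cancel_right_right)

lemma ring_hom_map_one: "ring_hom_map h \<Longrightarrow> h 1 = 1"
  unfolding ring_hom_map_def by auto

lemma ring_hom_map_add: "ring_hom_map h \<Longrightarrow> h (a + b) = h a + h b"
  unfolding ring_hom_map_def by auto

lemma ring_hom_map_mult: "ring_hom_map h \<Longrightarrow> h (a * b) = h a * h b"
  unfolding ring_hom_map_def by auto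

lemma ring_hom_map_uminus: "ring_hom_map h \<Longrightarrow> h (- a) = - h a"
  by (metis add_eq_0_iff2 ring_hom_map_zero ring_hom_map_add add.right_inverse)

lemma ring_hom_map_diff: "ring_hom_map h \<Longrightarrow> h (a - b) = h a - h b"
  by (metis diff_conv_add_uminus ring_hom_map_add ring_hom_map_uminus)

lemma ring_hom_map_power: "ring_hom_map h \<Longrightarrow> h (a ^ n) = h a ^ n"
  by (induction n) (simp_all add: ring_hom_map_one ring_hom_map_mult)

lemma ring_hom_map_of_nat: "ring_hom_map h \<Longrightarrow> h (of_nat n) = of_nat n"
  by (induction n) (simp_all add: ring_hom_map_zero ring_hom_map_one ring_hom_map_add)

lemma ring_hom_map_sum: "ring_hom_map h \<Longrightarrow> h (sum f A) = (\<Sum>i\<in>A. h (f i))"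
  by (induction A rule: infinite_finite_induct) (simp_all add: ring_hom_map_zero ring_hom_map_add)

lemmas ring_hom_map_simps = ring_hom_map_zero ring_hom_map_one ring_hom_map_add ring_hom_map_mult
  ring_hom_map_uminus ring_hom_map_diff ring_hom_map_power ring_hom_map_of_nat ring_hom_map_sum

definition monomial_value :: "(nat \<Rightarrow> 'a::comm_ring_1) \<Rightarrow> (nat \<Rightarrow>\<^sub>0 nat) \<Rightarrow> 'a" where
  "monomial_value x m = (\<Prod>j\<in>Poly_Mapping.keys m. x j ^ Poly_Mapping.lookup m j)"

lemma monomial_value_add: "monomial_value x (m + n) = monomial_value x m * monomial_value x n"
proof -
  let ?S = "Poly_Mapping.keys m \<union> Poly_Mapping.keys n"
  have superset: "monomial_value x m' = (\<Prod>j\<in>?S. x j ^ Poly_Mapping.lookup m' j)"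
    if "Poly_Mapping.keys m' \<subseteq> ?S" for m'
    unfolding monomial_value_def
    by (rule prod.mono_neutral_left) (use that in \<open>auto simp: not_in_keys_iff_lookup_eq_zero\<close>)
  show ?thesis
    by (simp add: superset keys_add lookup_add power_add prod.distrib)
qed

lemma peval_add: "peval of_int x (P + Q) = peval of_int x P + peval of_int x Q"
  unfolding peval_def monomial_value_def[symmetric]
  by (rule setsum_keys_plus_distrib) (simp_all add: distrib_right)

lemma peval_diff: "peval of_int x (P - Q) = peval of_int x P - peval of_int x Q"
  using peval_add[of x "P - Q" Q] by simp

lemma peval_single: "peval of_int x (Poly_Mapping.single m c) = of_int c * monomial_value x m"
  by (cases "c = 0") (simp_all add: peval_def monomial_value_def)

lemma peval_mult: "peval of_int x (P * Q) = peval of_int x P * peval of_int x Q"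
  using subset_UNIV
proof (induction P rule: frag_induction)
  case zero
  then show ?case by (simp add: peval_def)
next
  case (one m)
  show ?case
    using subset_UNIV
  proof (induction Q rule: frag_induction)
    case zero
    then show ?case by (simp add: peval_def)
  next
    case (one n)
    then show ?case by (simp add: mult_single peval_single monomial_value_add)
  next
    case (diff a b)
    then show ?case by (simp add: right_diff_distrib peval_diff)
  qed
next
  case (diff a b)
  then show ?case by (simp add: left_diff_distrib peval_diff)
qed

lemma ring_hom_map_peval: "ring_hom_map (peval of_int x)"
proof -
  have "peval of_int x 1 = 1"
    using peval_single[of x 0 1] by (simp add: monomial_value_def)
  then show ?thesis
    by (simp add: ring_hom_map_def peval_add peval_mult)
qed

definition Var :: "nat \<Rightarrow> int mpoly" where
  "Var k = Poly_Mapping.single (Poly_Mapping.single k 1) 1"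

lemma peval_Var: "peval of_int x (Var k) = x k"
  by (simp add: Var_def peval_single monomial_value_def)

lemma Var_mult_cancel:
  "0 < p \<Longrightarrow> of_nat p * Var k * P = of_nat p * Var k * Q \<Longrightarrow> P = Q"
  by (simp add: Var_def)

definition binom_cross :: "nat \<Rightarrow> 'a::comm_ring_1 \<Rightarrow> 'a \<Rightarrow> 'a" where
  "binom_cross p a b = (\<Sum>i\<in>{1..p-1}. of_nat ((p choose i) div p) * a ^ i * b ^ (p - i))"

lemma binom_cross_times_p:
  assumes "prime p"
  shows "of_nat p * binom_cross p a b = (a + b) ^ p - a ^ p - b ^ p"
proof -
  have "p > 0" using assms by (simp add: prime_gt_0_nat)
  then have split: "{..p} = insert 0 (insert p {1..p-1})" by auto
  have choose: "of_nat p * of_nat ((p choose i) div p) = (of_nat (p choose i) :: 'a)"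
    if "i \<in> {1..p-1}" for i
  proof -
    have "p dvd (p choose i)" using that assms by (intro dvd_choose_prime) auto
    then show ?thesis by (simp flip: of_nat_mult)
  qed
  have "(a + b) ^ p = (\<Sum>i\<le>p. of_nat (p choose i) * a ^ i * b ^ (p - i))"
    by (simp add: binomial_ring)
  also have "\<dots> = b ^ p + a ^ p + (\<Sum>i\<in>{1..p-1}. of_nat (p choose i) * a ^ i * b ^ (p - i))"
    using \<open>p > 0\<close> by (simp add: split)
  also have "(\<Sum>i\<in>{1..p-1}. of_nat (p choose i) * a ^ i * b ^ (p - i)) = of_nat p * binom_cross p a b"
    unfolding binom_cross_def sum_distrib_left
    by (rule sum.cong) (simp_all add: choose[symmetric] mult.assoc)
  finally show ?thesis by simp
qed

definition ghost :: "nat \<Rightarrow> 'a::comm_ring_1 \<Rightarrow> 'a \<Rightarrow> 'a" where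
  "ghost p a da = a ^ p + of_nat p * da"

definition delta_add :: "nat \<Rightarrow> 'a::comm_ring_1 \<Rightarrow> 'a \<Rightarrow> 'a \<Rightarrow> 'a \<Rightarrow> 'a" where
  "delta_add p a b da db = da + db - binom_cross p a b"

definition delta_mult :: "nat \<Rightarrow> 'a::comm_ring_1 \<Rightarrow> 'a \<Rightarrow> 'a \<Rightarrow> 'a \<Rightarrow> 'a" where
  "delta_mult p a b da db = da * b ^ p + a ^ p * db + of_nat p * da * db"

lemma ghost_delta_add:
  "prime p \<Longrightarrow> ghost p (a + b) (delta_add p a b da db) = ghost p a da + ghost p b db"
  unfolding ghost_def delta_add_def
  by (simp add: right_diff_distrib binom_cross_times_p distrib_left)

lemma ghost_delta_mult:
  "ghost p (a * b) (delta_mult p a b da db) = ghost p a da * ghost p b db"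
  unfolding ghost_def delta_mult_def by (simp add: algebra_simps power_mult_distrib)

definition deriv_mult :: "'a::comm_ring_1 \<Rightarrow> 'a \<Rightarrow> 'a \<Rightarrow> 'a \<Rightarrow> 'a \<Rightarrow> 'a" where
  "deriv_mult \<alpha> a Da b Db = Da * b + a * Db + \<alpha> * Da * Db"

lemma alpha_times_deriv_mult:
  "\<alpha> * deriv_mult \<alpha> a Da b Db = (a + \<alpha> * Da) * (b + \<alpha> * Db) - a * b"
  unfolding deriv_mult_def by (simp add: algebra_simps)

primrec power_deriv :: "nat \<Rightarrow> 'a::comm_ring_1 \<Rightarrow> 'a \<Rightarrow> 'a \<Rightarrow> 'a" where
  "power_deriv 0 \<alpha> x Dx = 0"
| "power_deriv (Suc n) \<alpha> x Dx = deriv_mult \<alpha> x Dx (x ^ n) (power_deriv n \<alpha> x Dx)"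

lemma alpha_times_power_deriv:
  "\<alpha> * power_deriv n \<alpha> x Dx = (x + \<alpha> * Dx) ^ n - x ^ n"
  by (induction n) (simp_all add: alpha_times_deriv_mult algebra_simps)

lemma power_deriv_zero: "power_deriv n \<alpha> x 0 = 0"
  by (induction n) (simp_all add: deriv_mult_def)

definition cross_deriv :: "nat \<Rightarrow> 'a::comm_ring_1 \<Rightarrow> 'a \<Rightarrow> 'a \<Rightarrow> 'a \<Rightarrow> 'a \<Rightarrow> 'a" where
  "cross_deriv p \<alpha> x Dx y Dy = (\<Sum>i\<in>{1..p-1}. of_nat ((p choose i) div p)
     * deriv_mult \<alpha> (x ^ i) (power_deriv i \<alpha> x Dx) (y ^ (p - i)) (power_deriv (p - i) \<alpha> y Dy))"

lemma alpha_times_cross_deriv: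
  "\<alpha> * cross_deriv p \<alpha> x Dx y Dy = binom_cross p (x + \<alpha> * Dx) (y + \<alpha> * Dy) - binom_cross p x y"
  unfolding cross_deriv_def binom_cross_def sum_distrib_left sum_subtractf[symmetric]
  by (rule sum.cong) (simp_all add: mult.left_commute[of \<alpha>] alpha_times_deriv_mult alpha_times_power_deriv
      algebra_simps)

definition compat_rhs :: "nat \<Rightarrow> 'a::comm_ring_1 \<Rightarrow> 'a \<Rightarrow> 'a \<Rightarrow> 'a \<Rightarrow> 'a \<Rightarrow> 'a" where
  "compat_rhs p \<alpha> \<beta> x Dx \<delta>Dx = (\<alpha> ^ (p - 1) + of_nat p * \<beta>) * \<delta>Dx + \<beta> * Dx ^ p
     - (\<Sum>\<nu>\<in>{1..p-1}. of_nat ((p choose \<nu>) div p) * x ^ (p - \<nu>) * \<alpha> ^ (\<nu> - 1) * Dx ^ \<nu>)"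

lemma p_alpha_times_compat_rhs:
  assumes "prime p"
  shows "of_nat p * \<alpha> * compat_rhs p \<alpha> \<beta> x Dx \<delta>Dx
    = ghost p \<alpha> (\<alpha> * \<beta>) * ghost p Dx \<delta>Dx + x ^ p - (x + \<alpha> * Dx) ^ p"
proof -
  have "p > 0" using assms by (simp add: prime_gt_0_nat)
  then have alpha_p: "\<alpha> ^ p = \<alpha> * \<alpha> ^ (p - 1)" by (cases p) auto
  let ?S = "\<Sum>\<nu>\<in>{1..p-1}. of_nat ((p choose \<nu>) div p) * x ^ (p - \<nu>) * \<alpha> ^ (\<nu> - 1) * Dx ^ \<nu>"
  have alpha_sum: "\<alpha> * ?S = binom_cross p (\<alpha> * Dx) x"
    unfolding binom_cross_def sum_distrib_left
  proof (rule sum.cong)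
    fix \<nu> assume "\<nu> \<in> {1..p-1}"
    then have "\<alpha> ^ \<nu> = \<alpha> * \<alpha> ^ (\<nu> - 1)" by (cases \<nu>) auto
    then show "\<alpha> * (of_nat ((p choose \<nu>) div p) * x ^ (p - \<nu>) * \<alpha> ^ (\<nu> - 1) * Dx ^ \<nu>)
      = of_nat ((p choose \<nu>) div p) * (\<alpha> * Dx) ^ \<nu> * x ^ (p - \<nu>)"
      by (simp add: power_mult_distrib)
  qed simp
  have "of_nat p * \<alpha> * compat_rhs p \<alpha> \<beta> x Dx \<delta>Dx
      = of_nat p * (\<alpha> * \<alpha> ^ (p - 1) + of_nat p * \<alpha> * \<beta>) * \<delta>Dx + of_nat p * \<alpha> * \<beta> * Dx ^ p
        - of_nat p * (\<alpha> * ?S)"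
    unfolding compat_rhs_def by (simp add: algebra_simps)
  also have "\<dots> = of_nat p * (\<alpha> * \<alpha> ^ (p - 1) + of_nat p * \<alpha> * \<beta>) * \<delta>Dx + of_nat p * \<alpha> * \<beta> * Dx ^ p
        - of_nat p * binom_cross p (\<alpha> * Dx) x"
    by (simp only: alpha_sum)
  also have "\<dots> = of_nat p * (\<alpha> ^ p + of_nat p * \<alpha> * \<beta>) * \<delta>Dx + of_nat p * \<alpha> * \<beta> * Dx ^ p
        - ((\<alpha> * Dx + x) ^ p - (\<alpha> * Dx) ^ p - x ^ p)"
    by (simp add: binom_cross_times_p[OF assms] alpha_p)
  finally show ?thesis
    unfolding ghost_def by (simp add: algebra_simps power_mult_distrib)
qed

section \<open>Jets\<close>

(* The delta-compatibility defect of x, x + y and x * y is a polynomial in the jets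
   (x, D x, \<delta> x, \<delta> (D x), D (\<delta> x)) of x and y. *)
datatype 'a jet = Jet (jet_val: 'a) (jet_der: 'a) (jet_delta: 'a) (jet_delta_der: 'a) (jet_der_delta: 'a)

fun jet_add :: "nat \<Rightarrow> 'a::comm_ring_1 \<Rightarrow> 'a jet \<Rightarrow> 'a jet \<Rightarrow> 'a jet" where
  "jet_add p \<alpha> (Jet a Da \<delta>a \<delta>Da D\<delta>a) (Jet b Db \<delta>b \<delta>Db D\<delta>b) =
     Jet (a + b) (Da + Db) (delta_add p a b \<delta>a \<delta>b) (delta_add p Da Db \<delta>Da \<delta>Db)
       (D\<delta>a + D\<delta>b - cross_deriv p \<alpha> a Da b Db)"

fun jet_mult :: "nat \<Rightarrow> 'a::comm_ring_1 \<Rightarrow> 'a \<Rightarrow> 'a jet \<Rightarrow> 'a jet \<Rightarrow> 'a jet" where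
  "jet_mult p \<alpha> \<beta> (Jet a Da \<delta>a \<delta>Da D\<delta>a) (Jet b Db \<delta>b \<delta>Db D\<delta>b) =
     Jet (a * b) (deriv_mult \<alpha> a Da b Db) (delta_mult p a b \<delta>a \<delta>b)
       (delta_add p (Da * b + a * Db) (\<alpha> * Da * Db)
          (delta_add p (Da * b) (a * Db) (delta_mult p Da b \<delta>Da \<delta>b) (delta_mult p a Db \<delta>a \<delta>Db))
          (delta_mult p (\<alpha> * Da) Db (delta_mult p \<alpha> Da (\<alpha> * \<beta>) \<delta>Da) \<delta>Db))
       (deriv_mult \<alpha> \<delta>a D\<delta>a (b ^ p) (power_deriv p \<alpha> b Db)
          + deriv_mult \<alpha> (a ^ p) (power_deriv p \<alpha> a Da) \<delta>b D\<delta>b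
          + of_nat p * deriv_mult \<alpha> \<delta>a D\<delta>a \<delta>b D\<delta>b)"

fun jet_defect :: "nat \<Rightarrow> 'a::comm_ring_1 \<Rightarrow> 'a \<Rightarrow> 'a jet \<Rightarrow> 'a" where
  "jet_defect p \<alpha> \<beta> (Jet a Da \<delta>a \<delta>Da D\<delta>a) = D\<delta>a - compat_rhs p \<alpha> \<beta> a Da \<delta>Da"

(* Formal versions of \<sigma> \<circ> F and F \<circ> \<sigma>, for the ring endomorphisms \<sigma> x = x + \<alpha> D x
   and F x = ghost p x (\<delta> x) (the Frobenius lift). *)
fun jet_sigma_frob :: "nat \<Rightarrow> 'a::comm_ring_1 \<Rightarrow> 'a jet \<Rightarrow> 'a" where
  "jet_sigma_frob p \<alpha> (Jet a Da \<delta>a \<delta>Da D\<delta>a) = ghost p a \<delta>a + \<alpha> * (power_deriv p \<alpha> a Da + of_nat p * D\<delta>a)"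

fun jet_frob_sigma :: "nat \<Rightarrow> 'a::comm_ring_1 \<Rightarrow> 'a \<Rightarrow> 'a jet \<Rightarrow> 'a" where
  "jet_frob_sigma p \<alpha> \<beta> (Jet a Da \<delta>a \<delta>Da D\<delta>a) = ghost p a \<delta>a + ghost p \<alpha> (\<alpha> * \<beta>) * ghost p Da \<delta>Da"

lemma jet_sigma_frob_expand:
  "jet_sigma_frob p \<alpha> (Jet a Da \<delta>a \<delta>Da D\<delta>a) = (a + \<alpha> * Da) ^ p + of_nat p * (\<delta>a + \<alpha> * D\<delta>a)"
  by (simp only: jet_sigma_frob.simps ghost_def distrib_left alpha_times_power_deriv) (simp add: algebra_simps)

lemma p_alpha_times_jet_defect:
  assumes "prime p"
  shows "of_nat p * \<alpha> * jet_defect p \<alpha> \<beta> j = jet_sigma_frob p \<alpha> j - jet_frob_sigma p \<alpha> \<beta> j"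
proof (cases j)
  case (Jet a Da \<delta>a \<delta>Da D\<delta>a)
  have "of_nat p * \<alpha> * jet_defect p \<alpha> \<beta> j = of_nat p * \<alpha> * D\<delta>a - of_nat p * \<alpha> * compat_rhs p \<alpha> \<beta> a Da \<delta>Da"
    by (simp add: Jet right_diff_distrib)
  then show ?thesis
    by (simp only: Jet p_alpha_times_compat_rhs[OF assms] jet_sigma_frob_expand jet_frob_sigma.simps)
      (simp add: ghost_def algebra_simps)
qed

lemma jet_sigma_frob_add:
  assumes "prime p"
  shows "jet_sigma_frob p \<alpha> (jet_add p \<alpha> j k) = jet_sigma_frob p \<alpha> j + jet_sigma_frob p \<alpha> k"
proof (cases j, cases k)
  fix a Da \<delta>a \<delta>Da D\<delta>a b Db \<delta>b \<delta>Db D\<delta>b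
  assume jk: "j = Jet a Da \<delta>a \<delta>Da D\<delta>a" "k = Jet b Db \<delta>b \<delta>Db D\<delta>b"
  have "jet_sigma_frob p \<alpha> (jet_add p \<alpha> j k)
      = (a + b + \<alpha> * (Da + Db)) ^ p + of_nat p * (\<delta>a + \<delta>b + \<alpha> * (D\<delta>a + D\<delta>b))
        - of_nat p * binom_cross p a b - of_nat p * (\<alpha> * cross_deriv p \<alpha> a Da b Db)"
    by (simp only: jk jet_add.simps jet_sigma_frob_expand delta_add_def) (simp add: algebra_simps)
  also have "\<dots> = jet_sigma_frob p \<alpha> j + jet_sigma_frob p \<alpha> k"
    by (simp only: jk jet_sigma_frob_expand alpha_times_cross_deriv right_diff_distrib binom_cross_times_p[OF assms])
      (simp add: algebra_simps)
  finally show ?thesis .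
qed

lemma jet_frob_sigma_add:
  assumes "prime p"
  shows "jet_frob_sigma p \<alpha> \<beta> (jet_add p \<alpha> j k) = jet_frob_sigma p \<alpha> \<beta> j + jet_frob_sigma p \<alpha> \<beta> k"
  by (cases j, cases k) (simp add: ghost_delta_add[OF assms] algebra_simps)

lemma jet_sigma_frob_mult:
  "jet_sigma_frob p \<alpha> (jet_mult p \<alpha> \<beta> j k) = jet_sigma_frob p \<alpha> j * jet_sigma_frob p \<alpha> k"
proof (cases j, cases k)
  fix a Da \<delta>a \<delta>Da D\<delta>a b Db \<delta>b \<delta>Db D\<delta>b
  assume jk: "j = Jet a Da \<delta>a \<delta>Da D\<delta>a" "k = Jet b Db \<delta>b \<delta>Db D\<delta>b"
  have sigma_mult: "a * b + \<alpha> * deriv_mult \<alpha> a Da b Db = (a + \<alpha> * Da) * (b + \<alpha> * Db)"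
    by (simp add: alpha_times_deriv_mult)
  have "jet_sigma_frob p \<alpha> (jet_mult p \<alpha> \<beta> j k)
      = ghost p (a * b) (delta_mult p a b \<delta>a \<delta>b) + \<alpha> * power_deriv p \<alpha> (a * b) (deriv_mult \<alpha> a Da b Db)
        + of_nat p * (\<alpha> * deriv_mult \<alpha> \<delta>a D\<delta>a (b ^ p) (power_deriv p \<alpha> b Db))
        + of_nat p * (\<alpha> * deriv_mult \<alpha> (a ^ p) (power_deriv p \<alpha> a Da) \<delta>b D\<delta>b)
        + of_nat p * of_nat p * (\<alpha> * deriv_mult \<alpha> \<delta>a D\<delta>a \<delta>b D\<delta>b)"
    by (simp add: jk algebra_simps)
  also have "\<dots> = jet_sigma_frob p \<alpha> j * jet_sigma_frob p \<alpha> k"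
    by (simp only: jk ghost_delta_mult alpha_times_power_deriv sigma_mult)
      (simp only: alpha_times_deriv_mult alpha_times_power_deriv jet_sigma_frob_expand power_mult_distrib,
       simp add: ghost_def algebra_simps)
  finally show ?thesis .
qed

lemma jet_frob_sigma_mult:
  assumes "prime p"
  shows "jet_frob_sigma p \<alpha> \<beta> (jet_mult p \<alpha> \<beta> j k) = jet_frob_sigma p \<alpha> \<beta> j * jet_frob_sigma p \<alpha> \<beta> k"
  by (cases j, cases k)
    (simp only: jet_mult.simps jet_frob_sigma.simps deriv_mult_def ghost_delta_add[OF assms]
       ghost_delta_mult, simp add: algebra_simps)

lemma p_alpha_times_jet_defect_add:
  assumes "prime p"
  shows "of_nat p * \<alpha> * jet_defect p \<alpha> \<beta> (jet_add p \<alpha> j k)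
    = of_nat p * \<alpha> * (jet_defect p \<alpha> \<beta> j + jet_defect p \<alpha> \<beta> k)"
  by (simp only: distrib_left p_alpha_times_jet_defect[OF assms] jet_sigma_frob_add[OF assms]
      jet_frob_sigma_add[OF assms]) (simp add: algebra_simps)

lemma p_alpha_times_jet_defect_mult:
  assumes "prime p"
  shows "of_nat p * \<alpha> * jet_defect p \<alpha> \<beta> (jet_mult p \<alpha> \<beta> j k)
    = of_nat p * \<alpha> * (jet_defect p \<alpha> \<beta> j * jet_sigma_frob p \<alpha> k + jet_sigma_frob p \<alpha> j * jet_defect p \<alpha> \<beta> k
        - of_nat p * \<alpha> * jet_defect p \<alpha> \<beta> j * jet_defect p \<alpha> \<beta> k)"
proof -
  let ?pa = "of_nat p * \<alpha>" and ?E = "jet_defect p \<alpha> \<beta>"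
  let ?U = "jet_sigma_frob p \<alpha>" and ?H = "jet_frob_sigma p \<alpha> \<beta>"
  have "?pa * (?E j * ?U k + ?U j * ?E k - ?pa * ?E j * ?E k)
      = (?pa * ?E j) * ?U k + ?U j * (?pa * ?E k) - (?pa * ?E j) * (?pa * ?E k)"
    by (simp add: algebra_simps)
  also have "\<dots> = (?U j - ?H j) * ?U k + ?U j * (?U k - ?H k) - (?U j - ?H j) * (?U k - ?H k)"
    by (simp only: p_alpha_times_jet_defect[OF assms])
  also have "\<dots> = ?U j * ?U k - ?H j * ?H k"
    by (simp add: algebra_simps)
  also have "\<dots> = ?pa * ?E (jet_mult p \<alpha> \<beta> j k)"
    by (simp add: p_alpha_times_jet_defect[OF assms] jet_sigma_frob_mult jet_frob_sigma_mult[OF assms])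
  finally show ?thesis by simp
qed

lemma ring_hom_map_binom_cross: "ring_hom_map h \<Longrightarrow> h (binom_cross p a b) = binom_cross p (h a) (h b)"
  by (simp add: binom_cross_def ring_hom_map_simps)

lemma ring_hom_map_ghost: "ring_hom_map h \<Longrightarrow> h (ghost p a da) = ghost p (h a) (h da)"
  by (simp add: ghost_def ring_hom_map_simps)

lemma ring_hom_map_delta_add:
  "ring_hom_map h \<Longrightarrow> h (delta_add p a b da db) = delta_add p (h a) (h b) (h da) (h db)"
  by (simp add: delta_add_def ring_hom_map_simps ring_hom_map_binom_cross)

lemma ring_hom_map_delta_mult:
  "ring_hom_map h \<Longrightarrow> h (delta_mult p a b da db) = delta_mult p (h a) (h b) (h da) (h db)"
  by (simp add: delta_mult_def ring_hom_map_simps)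

lemma ring_hom_map_deriv_mult:
  "ring_hom_map h \<Longrightarrow> h (deriv_mult \<alpha> a Da b Db) = deriv_mult (h \<alpha>) (h a) (h Da) (h b) (h Db)"
  by (simp add: deriv_mult_def ring_hom_map_simps)

lemma ring_hom_map_power_deriv:
  "ring_hom_map h \<Longrightarrow> h (power_deriv n \<alpha> x Dx) = power_deriv n (h \<alpha>) (h x) (h Dx)"
  by (induction n) (simp_all add: ring_hom_map_simps ring_hom_map_deriv_mult)

lemma ring_hom_map_cross_deriv:
  "ring_hom_map h \<Longrightarrow> h (cross_deriv p \<alpha> x Dx y Dy) = cross_deriv p (h \<alpha>) (h x) (h Dx) (h y) (h Dy)"
  by (simp add: cross_deriv_def ring_hom_map_simps ring_hom_map_deriv_mult ring_hom_map_power_deriv)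

lemma ring_hom_map_compat_rhs:
  "ring_hom_map h \<Longrightarrow> h (compat_rhs p \<alpha> \<beta> x Dx \<delta>Dx) = compat_rhs p (h \<alpha>) (h \<beta>) (h x) (h Dx) (h \<delta>Dx)"
  by (simp add: compat_rhs_def ring_hom_map_simps)

lemmas ring_hom_map_formal_ops = ring_hom_map_binom_cross ring_hom_map_ghost ring_hom_map_delta_add
  ring_hom_map_delta_mult ring_hom_map_deriv_mult ring_hom_map_power_deriv ring_hom_map_cross_deriv
  ring_hom_map_compat_rhs

lemma map_jet_add:
  "ring_hom_map h \<Longrightarrow> map_jet h (jet_add p \<alpha> j k) = jet_add p (h \<alpha>) (map_jet h j) (map_jet h k)"
  by (cases j, cases k) (simp add: ring_hom_map_simps ring_hom_map_formal_ops)

lemma map_jet_mult: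
  "ring_hom_map h \<Longrightarrow> map_jet h (jet_mult p \<alpha> \<beta> j k) = jet_mult p (h \<alpha>) (h \<beta>) (map_jet h j) (map_jet h k)"
  by (cases j, cases k) (simp add: ring_hom_map_simps ring_hom_map_formal_ops)

lemma ring_hom_map_jet_defect:
  "ring_hom_map h \<Longrightarrow> h (jet_defect p \<alpha> \<beta> j) = jet_defect p (h \<alpha>) (h \<beta>) (map_jet h j)"
  by (cases j) (simp add: ring_hom_map_simps ring_hom_map_formal_ops)

lemma ring_hom_map_jet_sigma_frob:
  "ring_hom_map h \<Longrightarrow> h (jet_sigma_frob p \<alpha> j) = jet_sigma_frob p (h \<alpha>) (map_jet h j)"
  by (cases j) (simp add: ring_hom_map_simps ring_hom_map_formal_ops)

definition var_jet :: "nat \<Rightarrow> int mpoly jet" where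
  "var_jet n = Jet (Var n) (Var (n + 1)) (Var (n + 2)) (Var (n + 3)) (Var (n + 4))"

lemma var_jets_specialize:
  obtains \<rho> where "map_jet (peval of_int \<rho>) (var_jet 0) = j" "map_jet (peval of_int \<rho>) (var_jet 5) = k"
    "peval of_int \<rho> (Var 10) = \<alpha>" "peval of_int \<rho> (Var 11) = \<beta>"
proof (cases j, cases k)
  fix a Da \<delta>a \<delta>Da D\<delta>a b Db \<delta>b \<delta>Db D\<delta>b
  assume "j = Jet a Da \<delta>a \<delta>Da D\<delta>a" "k = Jet b Db \<delta>b \<delta>Db D\<delta>b"
  then show thesis
    by (intro that[of "(!) [a, Da, \<delta>a, \<delta>Da, D\<delta>a, b, Db, \<delta>b, \<delta>Db, D\<delta>b, \<alpha>, \<beta>]"])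
      (simp_all add: var_jet_def peval_Var)
qed

lemma jet_defect_add:
  assumes "prime p"
  shows "jet_defect p \<alpha> \<beta> (jet_add p \<alpha> j k) = jet_defect p \<alpha> \<beta> j + jet_defect p \<alpha> \<beta> k"
proof -
  have "0 < p" using assms by (simp add: prime_gt_0_nat)
  obtain \<rho> where \<rho>: "map_jet (peval of_int \<rho>) (var_jet 0) = j" "map_jet (peval of_int \<rho>) (var_jet 5) = k"
    "peval of_int \<rho> (Var 10) = \<alpha>" "peval of_int \<rho> (Var 11) = \<beta>"
    by (rule var_jets_specialize)
  \<comment> \<open>p \<alpha> = p * Var 10 is a non-zero-divisor of the integer polynomial ring\<close>
  have "jet_defect p (Var 10) (Var 11) (jet_add p (Var 10) (var_jet 0) (var_jet 5))
      = jet_defect p (Var 10) (Var 11) (var_jet 0) + jet_defect p (Var 10) (Var 11) (var_jet 5)"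
    by (rule Var_mult_cancel[OF \<open>0 < p\<close> p_alpha_times_jet_defect_add[OF assms]])
  from arg_cong[where f = "peval of_int \<rho>", OF this] show ?thesis
    by (simp add: ring_hom_map_peval ring_hom_map_simps ring_hom_map_jet_defect map_jet_add \<rho>)
qed

lemma jet_defect_mult:
  assumes "prime p"
  shows "jet_defect p \<alpha> \<beta> (jet_mult p \<alpha> \<beta> j k)
    = jet_defect p \<alpha> \<beta> j * jet_sigma_frob p \<alpha> k + jet_sigma_frob p \<alpha> j * jet_defect p \<alpha> \<beta> k
      - of_nat p * \<alpha> * jet_defect p \<alpha> \<beta> j * jet_defect p \<alpha> \<beta> k"
proof -
  have "0 < p" using assms by (simp add: prime_gt_0_nat)
  obtain \<rho> where \<rho>: "map_jet (peval of_int \<rho>) (var_jet 0) = j" "map_jet (peval of_int \<rho>) (var_jet 5) = k"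
    "peval of_int \<rho> (Var 10) = \<alpha>" "peval of_int \<rho> (Var 11) = \<beta>"
    by (rule var_jets_specialize)
  let ?\<alpha> = "Var 10" and ?\<beta> = "Var 11" and ?j = "var_jet 0" and ?k = "var_jet 5"
  have "jet_defect p ?\<alpha> ?\<beta> (jet_mult p ?\<alpha> ?\<beta> ?j ?k)
      = jet_defect p ?\<alpha> ?\<beta> ?j * jet_sigma_frob p ?\<alpha> ?k + jet_sigma_frob p ?\<alpha> ?j * jet_defect p ?\<alpha> ?\<beta> ?k
        - of_nat p * ?\<alpha> * jet_defect p ?\<alpha> ?\<beta> ?j * jet_defect p ?\<alpha> ?\<beta> ?k"
    by (rule Var_mult_cancel[OF \<open>0 < p\<close> p_alpha_times_jet_defect_mult[OF assms]])
  from arg_cong[where f = "peval of_int \<rho>", OF this] show ?thesis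
    by (simp add: ring_hom_map_peval ring_hom_map_simps ring_hom_map_jet_defect
        ring_hom_map_jet_sigma_frob map_jet_mult \<rho>)
qed

lemma delta_ring_zero: "delta_ring p \<delta> \<Longrightarrow> \<delta> 0 = 0"
  unfolding delta_ring_def by auto

lemma delta_ring_one: "delta_ring p \<delta> \<Longrightarrow> \<delta> 1 = 0"
  unfolding delta_ring_def by auto

lemma delta_ring_add: "delta_ring p \<delta> \<Longrightarrow> \<delta> (x + y) = delta_add p x y (\<delta> x) (\<delta> y)"
  unfolding delta_ring_def delta_add_def binom_cross_def by auto

lemma delta_ring_mult: "delta_ring p \<delta> \<Longrightarrow> \<delta> (x * y) = delta_mult p x y (\<delta> x) (\<delta> y)"
  unfolding delta_ring_def delta_mult_def by auto

lemma alpha_derivation_add: "alpha_derivation \<phi> \<alpha> D \<Longrightarrow> D (x + y) = D x + D y"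
  unfolding alpha_derivation_def by auto

lemma alpha_derivation_mult: "alpha_derivation \<phi> \<alpha> D \<Longrightarrow> D (x * y) = deriv_mult \<alpha> x (D x) y (D y)"
  unfolding alpha_derivation_def deriv_mult_def by auto

lemma alpha_derivation_one: "alpha_derivation \<phi> \<alpha> D \<Longrightarrow> D 1 = 0"
  unfolding alpha_derivation_def by auto

lemma alpha_derivation_zero: "alpha_derivation \<phi> \<alpha> D \<Longrightarrow> D 0 = 0"
  using alpha_derivation_add[of \<phi> \<alpha> D 0 0] by simp

lemma alpha_derivation_diff: "alpha_derivation \<phi> \<alpha> D \<Longrightarrow> D (x - y) = D x - D y"
  using alpha_derivation_add[of \<phi> \<alpha> D "x - y" y] by (simp add: algebra_simps)

lemma alpha_derivation_const_mult: "alpha_derivation \<phi> \<alpha> D \<Longrightarrow> D (\<phi> r * x) = \<phi> r * D x"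
  unfolding alpha_derivation_def by auto

lemma alpha_derivation_const: "alpha_derivation \<phi> \<alpha> D \<Longrightarrow> D (\<phi> r) = 0"
  using alpha_derivation_const_mult[of \<phi> \<alpha> D r 1] by (simp add: alpha_derivation_one)

lemma alpha_derivation_of_nat:
  "alpha_derivation \<phi> \<alpha> D \<Longrightarrow> ring_hom_map \<phi> \<Longrightarrow> D (of_nat n) = 0"
  using alpha_derivation_const[of \<phi> \<alpha> D "of_nat n"] by (simp add: ring_hom_map_of_nat)

lemma alpha_derivation_sum: "alpha_derivation \<phi> \<alpha> D \<Longrightarrow> D (sum f A) = (\<Sum>i\<in>A. D (f i))"
  by (induction A rule: infinite_finite_induct) (simp_all add: alpha_derivation_zero alpha_derivation_add)

lemma alpha_derivation_power: "alpha_derivation \<phi> \<alpha> D \<Longrightarrow> D (x ^ n) = power_deriv n \<alpha> x (D x)"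
  by (induction n) (simp_all add: alpha_derivation_one alpha_derivation_mult)

lemma alpha_derivation_binom_cross:
  assumes "alpha_derivation \<phi> \<alpha> D" "ring_hom_map \<phi>"
  shows "D (binom_cross p x y) = cross_deriv p \<alpha> x (D x) y (D y)"
  unfolding binom_cross_def cross_deriv_def alpha_derivation_sum[OF assms(1)]
  by (simp add: alpha_derivation_of_nat[OF assms] alpha_derivation_mult[OF assms(1)]
      alpha_derivation_power[OF assms(1)]) (simp add: deriv_mult_def algebra_simps)

definition jet_of :: "('a \<Rightarrow> 'a) \<Rightarrow> ('a \<Rightarrow> 'a) \<Rightarrow> 'a \<Rightarrow> 'a jet" where
  "jet_of \<delta> D x = Jet x (D x) (\<delta> x) (\<delta> (D x)) (D (\<delta> x))"

lemma delta_compatible_elem_iff_jet_defect: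
  "delta_compatible_elem p \<delta> \<alpha> \<beta> D x \<longleftrightarrow> jet_defect p \<alpha> \<beta> (jet_of \<delta> D x) = 0"
  by (simp add: delta_compatible_elem_def jet_of_def compat_rhs_def)

lemma jet_of_add:
  assumes "delta_ring p \<delta>" "alpha_derivation \<phi> \<alpha> D" "ring_hom_map \<phi>"
  shows "jet_of \<delta> D (x + y) = jet_add p \<alpha> (jet_of \<delta> D x) (jet_of \<delta> D y)"
  by (simp add: jet_of_def delta_ring_add[OF assms(1)] delta_add_def alpha_derivation_add[OF assms(2)]
      alpha_derivation_diff[OF assms(2)] alpha_derivation_binom_cross[OF assms(2,3)])

lemma jet_of_mult:
  assumes \<delta>: "delta_ring p \<delta>" and D: "alpha_derivation \<phi> \<alpha> D" and \<phi>: "ring_hom_map \<phi>"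
    and \<delta>\<alpha>: "\<delta> \<alpha> = \<alpha> * \<beta>"
  shows "jet_of \<delta> D (x * y) = jet_mult p \<alpha> \<beta> (jet_of \<delta> D x) (jet_of \<delta> D y)"
proof -
  have "D (\<delta> (x * y)) = deriv_mult \<alpha> (\<delta> x) (D (\<delta> x)) (y ^ p) (power_deriv p \<alpha> y (D y))
      + deriv_mult \<alpha> (x ^ p) (power_deriv p \<alpha> x (D x)) (\<delta> y) (D (\<delta> y))
      + of_nat p * deriv_mult \<alpha> (\<delta> x) (D (\<delta> x)) (\<delta> y) (D (\<delta> y))"
    by (simp add: delta_ring_mult[OF \<delta>] delta_mult_def alpha_derivation_add[OF D]
        alpha_derivation_mult[OF D] alpha_derivation_power[OF D] alpha_derivation_of_nat[OF D \<phi>])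
      (simp add: deriv_mult_def algebra_simps)
  then show ?thesis
    by (simp add: jet_of_def alpha_derivation_mult[OF D] deriv_mult_def delta_ring_add[OF \<delta>]
        delta_ring_mult[OF \<delta>] \<delta>\<alpha>)
qed

lemma jet_of_const:
  assumes "delta_algebra p \<delta>R \<delta>A \<phi>" "alpha_derivation \<phi> \<alpha> D"
  shows "jet_of \<delta>A D (\<phi> r) = Jet (\<phi> r) 0 (\<phi> (\<delta>R r)) 0 0"
proof -
  have "\<delta>A (\<phi> r) = \<phi> (\<delta>R r)" "delta_ring p \<delta>A"
    using assms(1) by (simp_all add: delta_algebra_def)
  then show ?thesis
    by (simp add: jet_of_def alpha_derivation_const[OF assms(2)] delta_ring_zero)
qed

lemma jet_of_one:
  assumes "delta_ring p \<delta>" "alpha_derivation \<phi> \<alpha> D"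
  shows "jet_of \<delta> D 1 = Jet 1 0 0 0 0"
  using assms by (simp add: jet_of_def delta_ring_one delta_ring_zero alpha_derivation_one alpha_derivation_zero)

section \<open>Ideals and Kaehler differentials\<close>

lemma ideal_gen_base: "s \<in> S \<Longrightarrow> s \<in> ideal_gen S"
  using ideal_gen.gen_mult[of s S 1] by simp

lemma ideal_gen_mult_left: "x \<in> ideal_gen S \<Longrightarrow> a * x \<in> ideal_gen S"
proof (induction x rule: ideal_gen.induct)
  case (gen_mult s b)
  then show ?case using ideal_gen.gen_mult[of s S "a * b"] by (simp add: mult.assoc)
qed (simp_all add: distrib_left ideal_gen.intros)

lemma ideal_gen_ring_hom:
  assumes "ring_hom_map h" "\<And>s. s \<in> S \<Longrightarrow> h s \<in> ideal_gen S'" "x \<in> ideal_gen S"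
  shows "h x \<in> ideal_gen S'"
  using assms(3)
  by (induction rule: ideal_gen.induct) (simp_all add: assms(1,2) ring_hom_map_simps ideal_gen.intros ideal_gen_mult_left)

lemma ext_ideal_UNIV:
  assumes "ring_hom_map \<phi>"
  shows "ext_ideal \<phi> UNIV = UNIV"
proof -
  have "x \<in> ideal_gen (range \<phi>)" for x
    using ideal_gen.gen_mult[OF rangeI[of \<phi> 1], of x] by (simp add: ring_hom_map_one[OF assms])
  then show ?thesis by (auto simp: ext_ideal_def)
qed

lemma ext_ideal_mult_pow:
  assumes \<phi>: "ring_hom_map \<phi>" and x: "x \<in> ext_ideal \<phi> I" and y: "y \<in> ext_ideal \<phi> (ideal_pow I n)"
  shows "x * y \<in> ext_ideal \<phi> (ideal_pow I (Suc n))"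
  using x unfolding ext_ideal_def
proof induction
  case (gen_mult s a)
  then obtain i where i: "i \<in> I" "s = \<phi> i" by auto
  from y show ?case unfolding ext_ideal_def
  proof induction
    case (gen_mult t b)
    then obtain j where j: "j \<in> ideal_pow I n" "t = \<phi> j" by auto
    have "i * j \<in> ideal_pow I (Suc n)" using i j by (auto intro: ideal_gen_base)
    then have "(a * b) * \<phi> (i * j) \<in> ideal_gen (\<phi> ` ideal_pow I (Suc n))"
      by (intro ideal_gen.gen_mult) auto
    then show ?case using i j by (simp add: ring_hom_map_mult[OF \<phi>] algebra_simps)
  qed (simp_all add: distrib_left ideal_gen.intros)
qed (simp_all add: distrib_right ideal_gen.intros)

definition kahler_pairing :: "('a::comm_ring_1 \<Rightarrow> 'a) \<Rightarrow> ('a \<Rightarrow> 'a) \<Rightarrow> ('a \<Rightarrow>\<^sub>0 'a) \<Rightarrow> 'a" where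
  "kahler_pairing U E u = (\<Sum>c\<in>Poly_Mapping.keys u. U (Poly_Mapping.lookup u c) * E c)"

lemma kahler_pairing_zero: "kahler_pairing U E 0 = 0"
  by (simp add: kahler_pairing_def)

lemma kahler_pairing_add:
  "ring_hom_map U \<Longrightarrow> kahler_pairing U E (u + v) = kahler_pairing U E u + kahler_pairing U E v"
  unfolding kahler_pairing_def
  by (rule setsum_keys_plus_distrib) (simp_all add: ring_hom_map_simps distrib_right)

lemma kahler_pairing_diff:
  "ring_hom_map U \<Longrightarrow> kahler_pairing U E (u - v) = kahler_pairing U E u - kahler_pairing U E v"
  using kahler_pairing_add[of U E "u - v" v] by simp

lemma kahler_pairing_single:
  "ring_hom_map U \<Longrightarrow> kahler_pairing U E (Poly_Mapping.single c b) = U b * E c"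
  by (cases "b = 0") (simp_all add: kahler_pairing_def ring_hom_map_zero)

lemma kahler_pairing_sum:
  "ring_hom_map U \<Longrightarrow> kahler_pairing U E (\<Sum>i<(d::nat). Poly_Mapping.single (T i) (b i)) = (\<Sum>i<d. U (b i) * E (T i))"
  by (induction d) (simp_all add: kahler_pairing_zero kahler_pairing_add kahler_pairing_single)

lemma ext_ideal_zero: "0 \<in> ext_ideal \<phi> J"
  unfolding ext_ideal_def by (rule ideal_gen.gen_zero)

lemma ext_ideal_add: "y \<in> ext_ideal \<phi> J \<Longrightarrow> z \<in> ext_ideal \<phi> J \<Longrightarrow> y + z \<in> ext_ideal \<phi> J"
  unfolding ext_ideal_def by (rule ideal_gen.gen_add)

lemma ext_ideal_mult_left: "y \<in> ext_ideal \<phi> J \<Longrightarrow> a * y \<in> ext_ideal \<phi> J"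
  unfolding ext_ideal_def by (rule ideal_gen_mult_left)

lemma kahler_pairing_rel_in_ext_ideal_pow:
  fixes \<phi> :: "'r::comm_ring_1 \<Rightarrow> 'a::comm_ring_1" and U E :: "'a \<Rightarrow> 'a"
  assumes \<phi>: "ring_hom_map \<phi>" and U: "ring_hom_map U"
    and E_add: "\<And>x y. E (x + y) = E x + E y"
    and E_mult: "\<And>x y. E (x * y) = E x * U y + U x * E y - c * E x * E y"
    and E_const: "\<And>r. E (\<phi> r) = 0"
    and c: "c \<in> ext_ideal \<phi> I"
    and U_ideal: "\<And>x. x \<in> ext_ideal \<phi> I \<Longrightarrow> U x \<in> ext_ideal \<phi> I"
    and E_pow: "\<And>x. E x \<in> ext_ideal \<phi> (ideal_pow I n)"
    and u: "u \<in> kahler_rel \<phi> (ext_ideal \<phi> I)"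
  shows "kahler_pairing U E u \<in> ext_ideal \<phi> (ideal_pow I (Suc n))"
  using u
proof induction
  case (kr_add_rel a a' b)
  then show ?case
    by (simp only: kahler_pairing_diff[OF U] kahler_pairing_single[OF U] E_add)
      (simp add: ext_ideal_zero algebra_simps)
next
  case (kr_leibniz a a' b)
  have "kahler_pairing U E (Poly_Mapping.single (a * a') b - Poly_Mapping.single a' (b * a)
      - Poly_Mapping.single a (b * a')) = - (U b * E a') * (c * E a)"
    by (simp only: kahler_pairing_diff[OF U] kahler_pairing_single[OF U] E_mult ring_hom_map_mult[OF U])
      (simp add: algebra_simps)
  with ext_ideal_mult_pow[OF \<phi> c E_pow] show ?case
    by (simp only: ext_ideal_mult_left)
next
  case (kr_ideal y a)
  then show ?case
    by (simp del: ideal_pow.simps add: kahler_pairing_single[OF U] ext_ideal_mult_pow[OF \<phi> U_ideal E_pow])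
qed (simp_all del: ideal_pow.simps add: kahler_pairing_zero kahler_pairing_add[OF U]
    kahler_pairing_single[OF U] E_const ext_ideal_zero ext_ideal_add)

lemma twisted_derivation_in_ext_ideal_pow:
  fixes \<phi> :: "'r::comm_ring_1 \<Rightarrow> 'a::comm_ring_1" and U E :: "'a \<Rightarrow> 'a"
  assumes \<phi>: "ring_hom_map \<phi>" and U: "ring_hom_map U"
    and E_add: "\<And>x y. E (x + y) = E x + E y"
    and E_mult: "\<And>x y. E (x * y) = E x * U y + U x * E y - c * E x * E y"
    and E_const: "\<And>r. E (\<phi> r) = 0"
    and c: "c \<in> ext_ideal \<phi> I"
    and U_ideal: "\<And>x. x \<in> ext_ideal \<phi> I \<Longrightarrow> U x \<in> ext_ideal \<phi> I"
    and basis: "kahler_basis \<phi> (ext_ideal \<phi> I) d T"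
    and E_basis: "\<forall>i<d. E (T i) = 0"
  shows "E x \<in> ext_ideal \<phi> (ideal_pow I n)"
proof (induction n arbitrary: x)
  case 0
  then show ?case by (simp add: ext_ideal_UNIV[OF \<phi>])
next
  case (Suc n)
  obtain b where b: "Poly_Mapping.single x 1 - (\<Sum>i<d. Poly_Mapping.single (T i) (b i))
      \<in> kahler_rel \<phi> (ext_ideal \<phi> I)"
    using basis unfolding kahler_basis_def by blast
  have "kahler_pairing U E (Poly_Mapping.single x 1 - (\<Sum>i<d. Poly_Mapping.single (T i) (b i))) = E x"
    using E_basis by (simp add: kahler_pairing_diff[OF U] kahler_pairing_single[OF U]
        kahler_pairing_sum[OF U] ring_hom_map_one[OF U])
  with kahler_pairing_rel_in_ext_ideal_pow[OF assms(1-7) Suc.IH b] show ?case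
    by simp
qed

context
  fixes p :: nat and \<delta>R :: "'r::comm_ring_1 \<Rightarrow> 'r" and \<delta>A :: "'a::comm_ring_1 \<Rightarrow> 'a"
    and \<phi> :: "'r \<Rightarrow> 'a" and \<alpha> \<beta> :: 'a and D :: "'a \<Rightarrow> 'a"
  assumes p: "prime p" and alg: "delta_algebra p \<delta>R \<delta>A \<phi>"
    and \<delta>\<alpha>: "\<delta>A \<alpha> = \<alpha> * \<beta>" and D: "alpha_derivation \<phi> \<alpha> D"
begin

private lemma \<delta>A: "delta_ring p \<delta>A" and \<phi>: "ring_hom_map \<phi>"
  using alg by (simp_all add: delta_algebra_def)

lemma compat_defect_add:
  "jet_defect p \<alpha> \<beta> (jet_of \<delta>A D (x + y))
    = jet_defect p \<alpha> \<beta> (jet_of \<delta>A D x) + jet_defect p \<alpha> \<beta> (jet_of \<delta>A D y)"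
  by (simp add: jet_of_add[OF \<delta>A D \<phi>] jet_defect_add[OF p])

lemma compat_defect_mult:
  "jet_defect p \<alpha> \<beta> (jet_of \<delta>A D (x * y))
    = jet_defect p \<alpha> \<beta> (jet_of \<delta>A D x) * jet_sigma_frob p \<alpha> (jet_of \<delta>A D y)
      + jet_sigma_frob p \<alpha> (jet_of \<delta>A D x) * jet_defect p \<alpha> \<beta> (jet_of \<delta>A D y)
      - of_nat p * \<alpha> * jet_defect p \<alpha> \<beta> (jet_of \<delta>A D x) * jet_defect p \<alpha> \<beta> (jet_of \<delta>A D y)"
  by (simp add: jet_of_mult[OF \<delta>A D \<phi> \<delta>\<alpha>] jet_defect_mult[OF p])

lemma compat_defect_const: "jet_defect p \<alpha> \<beta> (jet_of \<delta>A D (\<phi> r)) = 0"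
proof -
  have "(\<Sum>\<nu>\<in>{1..p-1}. of_nat ((p choose \<nu>) div p) * \<phi> r ^ (p - \<nu>) * \<alpha> ^ (\<nu> - 1) * 0 ^ \<nu>) = (0::'a)"
    by (rule sum.neutral) (auto simp: power_0_left)
  then show ?thesis
    using prime_gt_0_nat[OF p] by (simp add: jet_of_const[OF alg D] compat_rhs_def power_0_left)
qed

lemma ring_hom_map_sigma_frob: "ring_hom_map (\<lambda>x. jet_sigma_frob p \<alpha> (jet_of \<delta>A D x))"
  using prime_gt_0_nat[OF p]
  by (simp add: ring_hom_map_def jet_of_one[OF \<delta>A D] jet_of_add[OF \<delta>A D \<phi>] jet_of_mult[OF \<delta>A D \<phi> \<delta>\<alpha>]
      jet_sigma_frob_add[OF p] jet_sigma_frob_mult ghost_def power_deriv_zero)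

lemma sigma_frob_const:
  "jet_sigma_frob p \<alpha> (jet_of \<delta>A D (\<phi> r)) = \<phi> (r ^ p + of_nat p * \<delta>R r)"
  by (simp add: jet_of_const[OF alg D] ghost_def power_deriv_zero ring_hom_map_simps \<phi>)

lemma sigma_frob_ext_ideal:
  assumes "is_ideal I" "of_nat p \<in> I" "x \<in> ext_ideal \<phi> I"
  shows "jet_sigma_frob p \<alpha> (jet_of \<delta>A D x) \<in> ext_ideal \<phi> I"
proof -
  have "r ^ p + of_nat p * \<delta>R r \<in> I" if "r \<in> I" for r
  proof -
    have "r ^ p = r ^ (p - 1) * r"
      using prime_gt_0_nat[OF p] by (simp flip: power_Suc2)
    then show ?thesis
      using assms(1,2) that unfolding is_ideal_def by (metis mult.commute)
  qed
  then have "jet_sigma_frob p \<alpha> (jet_of \<delta>A D s) \<in> ideal_gen (\<phi> ` I)" if "s \<in> \<phi> ` I" for s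
    using that by (auto simp: sigma_frob_const intro: ideal_gen_base)
  then show ?thesis
    using assms(3) unfolding ext_ideal_def by (rule ideal_gen_ring_hom[OF ring_hom_map_sigma_frob])
qed

end

theorem proposition6p12:
  fixes p :: nat
    and \<delta>R :: "'r::comm_ring_1 \<Rightarrow> 'r"
    and \<delta>A :: "'a::comm_ring_1 \<Rightarrow> 'a"
    and \<phi> :: "'r \<Rightarrow> 'a"
    and I :: "'r set"
    and d :: nat and T :: "nat \<Rightarrow> 'a"
    and \<alpha> \<beta> :: 'a and D :: "'a \<Rightarrow> 'a"
  assumes "prime p"
    and "delta_algebra p \<delta>R \<delta>A \<phi>"
    and "is_ideal I" and "of_nat p \<in> I"
    and "adically_separated \<phi> I"
    and "\<forall>n\<ge>1. smooth_quot \<phi> (ideal_pow I n) (ext_ideal \<phi> (ideal_pow I n))"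
    and "kahler_basis \<phi> (ext_ideal \<phi> I) d T"
    and "\<delta>A \<alpha> = \<alpha> * \<beta>"
    and "alpha_derivation \<phi> \<alpha> D"
  shows "delta_compatible p \<delta>A \<alpha> \<beta> D \<longleftrightarrow> (\<forall>i<d. delta_compatible_elem p \<delta>A \<alpha> \<beta> D (T i))"
proof
  assume "delta_compatible p \<delta>A \<alpha> \<beta> D"
  then show "\<forall>i<d. delta_compatible_elem p \<delta>A \<alpha> \<beta> D (T i)"
    by (simp add: delta_compatible_def)
next
  assume T: "\<forall>i<d. delta_compatible_elem p \<delta>A \<alpha> \<beta> D (T i)"
  have \<phi>: "ring_hom_map \<phi>"
    using assms(2) by (simp add: delta_algebra_def)
  have "\<phi> (of_nat p) \<in> ext_ideal \<phi> I"
    using assms(4) unfolding ext_ideal_def by (blast intro: ideal_gen_base)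
  then have "of_nat p * \<alpha> \<in> ext_ideal \<phi> I"
    using ext_ideal_mult_left[of _ \<phi> I \<alpha>] by (simp add: ring_hom_map_of_nat[OF \<phi>] mult.commute[of _ \<alpha>])
  then have "jet_defect p \<alpha> \<beta> (jet_of \<delta>A D x) \<in> ext_ideal \<phi> (ideal_pow I n)" for x n
    using T
    by (intro twisted_derivation_in_ext_ideal_pow[OF \<phi> ring_hom_map_sigma_frob[OF assms(1,2,8,9)]
          compat_defect_add[OF assms(1,2,8,9)] compat_defect_mult[OF assms(1,2,8,9)]
          compat_defect_const[OF assms(1,2,8,9)] _ sigma_frob_ext_ideal[OF assms(1,2,8,9,3,4)] assms(7)])
      (simp_all add: delta_compatible_elem_iff_jet_defect)
  then have "jet_defect p \<alpha> \<beta> (jet_of \<delta>A D x) = 0" for x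
    using assms(5) unfolding adically_separated_def by blast
  then show "delta_compatible p \<delta>A \<alpha> \<beta> D"
    by (simp add: delta_compatible_def delta_compatible_elem_iff_jet_defect)
qed

end
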